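(* Every modification of $D$ performed by any stage of the Purification procedure replaces $D$ by a cirquent of strictly smaller rank.
   Context: Cirquents: $\top$, $\bot$ and literals ($p$ or $\neg p$, $p$ an elementary letter) are cirquents; if $A,B$ are cirquents then so are $A\vee B$, $A\wedge B$, $A\sqcap^cB$ ($c$ a conjunctive cluster) and $A\sqcup^cB$ ($c$ a disjunctive cluster); clusters are drawn from two disjoint infinite sets. A surface occurrence of a subcirquent or connective is one not in the scope of any choice connective $\sqcup^c,\sqcap^c$. Tetration: ${}^1a=a$, ${}^{n+1}a=a^{({}^na)}$. Rank: $\overline{C}=1$ for $\top,\bot$ and literals; $\overline{A\sqcup^cB}=\overline{A\sqcap^cB}=\overline{A}+\overline{B}$; $\overline{A\wedge B}=5^{\overline{A}+\overline{B}}$; $\overline{A\vee B}={}^{(\overline{A}+\overline{B})}5$. Purification procedure applied to a cirquent $D$: Stages 1 through 7 are executed in order; each stage is a loop iterated until it no longer modifies the current $D$, after which the next stage begins (after Stage 7 the current $D$ is returned). Stage 1: if $D$ has a surface occurrence of $\bot\vee A$ or $A\vee\bot$, change it to $A$; next, if $D$ has a surface occurrence of $\bot\wedge A$ or $A\wedge\bot$, change it to $\bot$. Stage 2: a surface occurrence of $(A\wedge B)\vee C$ or $C\vee(A\wedge B)$ is changed to $(A\vee C)\wedge(B\vee C)$. Stage 3: a surface occurrence of $(A\sqcap^cB)\vee C$ or $C\vee(A\sqcap^cB)$ is changed to $(A\vee C)\sqcap^c(B\vee C)$. Stage 4: a surface occurrence of $A_1\vee\dots\vee A_n$ (any bracketing)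 such that for some letter $p$ both $p$ and $\neg p$ are among $A_1,\dots,A_n$ is changed to $\top$. Stage 5: a surface occurrence of $\top\vee A$ or $A\vee\top$ is changed to $\top$; next, a surface occurrence of $\top\wedge A$ or $A\wedge\top$ is changed to $A$. Stage 6: a surface occurrence of $(A\sqcap^aB)\wedge(E\sqcap^bF)$ is changed to $\big((A\wedge(E\sqcap^bF))\sqcap^a(B\wedge(E\sqcap^bF))\big)\sqcap^c\big(((A\sqcap^aB)\wedge E)\sqcap^b((A\sqcap^aB)\wedge F)\big)$, where $c$ is a conjunctive cluster not occurring in $D$. Stage 7: if $D$ is of the form $X[E\sqcap^cF]\sqcap^cA$ (resp. $A\sqcap^cX[E\sqcap^cF]$), change it to $X[E]\sqcap^cA$ (resp. $A\sqcap^cX[F]$), where $X[E\sqcap^cF]$ denotes a cirquent containing the subcirquent $E\sqcap^cF$ and $X[E]$ the result of replacing it by $E$. *)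

theory Defs
  imports Main
begin

text \<open>Conjunctive and
disjunctive clusters are drawn from two disjoint infinite sets; we model them as
natural numbers attached to distinct constructors (CAnd for choice-conjunction with
a conjunctive cluster, COr for choice-disjunction with a disjunctive cluster).
Lit True p is the literal p, Lit False p is the literal neg p.\<close>

datatype 'l cirq =
    Top
  | Bot
  | Lit bool 'l
  | Or "'l cirq" "'l cirq"
  | And "'l cirq" "'l cirq"
  | CAnd nat "'l cirq" "'l cirq"
  | COr nat "'l cirq" "'l cirq"

text \<open>Tetration: tet a 1 = a, tet a (n+1) = a ^ (tet a n). (Value at 0 is irrelevant.)\<close>
fun tet :: "nat \<Rightarrow> nat \<Rightarrow> nat" where
  "tet a 0 = 1"
| "tet a (Suc 0) = a"
| "tet a (Suc (Suc n)) = a ^ (tet a (Suc n))"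

fun rank :: "'l cirq \<Rightarrow> nat" where
  "rank Top = 1"
| "rank Bot = 1"
| "rank (Lit b p) = 1"
| "rank (CAnd c A B) = rank A + rank B"
| "rank (COr c A B) = rank A + rank B"
| "rank (And A B) = 5 ^ (rank A + rank B)"
| "rank (Or A B) = tet 5 (rank A + rank B)"

fun conj_clusters :: "'l cirq \<Rightarrow> nat set" where
  "conj_clusters (CAnd c A B) = insert c (conj_clusters A \<union> conj_clusters B)"
| "conj_clusters (COr c A B) = conj_clusters A \<union> conj_clusters B"
| "conj_clusters (And A B) = conj_clusters A \<union> conj_clusters B"
| "conj_clusters (Or A B) = conj_clusters A \<union> conj_clusters B"
| "conj_clusters _ = {}"

text \<open>surf_repl D X Y D': D' results from D by replacing one surface occurrence
(not in the scope of any choice connective) of X by Y.\<close>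
inductive surf_repl :: "'l cirq \<Rightarrow> 'l cirq \<Rightarrow> 'l cirq \<Rightarrow> 'l cirq \<Rightarrow> bool" where
  here: "surf_repl X X Y Y"
| orL: "surf_repl A X Y A' \<Longrightarrow> surf_repl (Or A B) X Y (Or A' B)"
| orR: "surf_repl B X Y B' \<Longrightarrow> surf_repl (Or A B) X Y (Or A B')"
| andL: "surf_repl A X Y A' \<Longrightarrow> surf_repl (And A B) X Y (And A' B)"
| andR: "surf_repl B X Y B' \<Longrightarrow> surf_repl (And A B) X Y (And A B')"

inductive any_repl :: "'l cirq \<Rightarrow> 'l cirq \<Rightarrow> 'l cirq \<Rightarrow> 'l cirq \<Rightarrow> bool" where
  here: "any_repl X X Y Y"
| orL: "any_repl A X Y A' \<Longrightarrow> any_repl (Or A B) X Y (Or A' B)"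
| orR: "any_repl B X Y B' \<Longrightarrow> any_repl (Or A B) X Y (Or A B')"
| andL: "any_repl A X Y A' \<Longrightarrow> any_repl (And A B) X Y (And A' B)"
| andR: "any_repl B X Y B' \<Longrightarrow> any_repl (And A B) X Y (And A B')"
| candL: "any_repl A X Y A' \<Longrightarrow> any_repl (CAnd c A B) X Y (CAnd c A' B)"
| candR: "any_repl B X Y B' \<Longrightarrow> any_repl (CAnd c A B) X Y (CAnd c A B')"
| corL: "any_repl A X Y A' \<Longrightarrow> any_repl (COr c A B) X Y (COr c A' B)"
| corR: "any_repl B X Y B' \<Longrightarrow> any_repl (COr c A B) X Y (COr c A B')"

fun disjuncts :: "'l cirq \<Rightarrow> 'l cirq list" where
  "disjuncts (Or A B) = disjuncts A @ disjuncts B"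
| "disjuncts C = [C]"

inductive stage_rule :: "nat \<Rightarrow> 'l cirq \<Rightarrow> 'l cirq \<Rightarrow> bool" where
  s1_orL: "surf_repl D (Or Bot A) A D' \<Longrightarrow> stage_rule 1 D D'"
| s1_orR: "surf_repl D (Or A Bot) A D' \<Longrightarrow> stage_rule 1 D D'"
| s1_andL: "surf_repl D (And Bot A) Bot D' \<Longrightarrow> stage_rule 1 D D'"
| s1_andR: "surf_repl D (And A Bot) Bot D' \<Longrightarrow> stage_rule 1 D D'"
| s2_L: "surf_repl D (Or (And A B) C) (And (Or A C) (Or B C)) D' \<Longrightarrow> stage_rule 2 D D'"
| s2_R: "surf_repl D (Or C (And A B)) (And (Or A C) (Or B C)) D' \<Longrightarrow> stage_rule 2 D D'"
| s3_L: "surf_repl D (Or (CAnd c A B) C) (CAnd c (Or A C) (Or B C)) D' \<Longrightarrow> stage_rule 3 D D'"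
| s3_R: "surf_repl D (Or C (CAnd c A B)) (CAnd c (Or A C) (Or B C)) D' \<Longrightarrow> stage_rule 3 D D'"
| s4: "\<lbrakk> Lit True p \<in> set (disjuncts (Or A B)); Lit False p \<in> set (disjuncts (Or A B));
        surf_repl D (Or A B) Top D' \<rbrakk> \<Longrightarrow> stage_rule 4 D D'"
| s5_orL: "surf_repl D (Or Top A) Top D' \<Longrightarrow> stage_rule 5 D D'"
| s5_orR: "surf_repl D (Or A Top) Top D' \<Longrightarrow> stage_rule 5 D D'"
| s5_andL: "surf_repl D (And Top A) A D' \<Longrightarrow> stage_rule 5 D D'"
| s5_andR: "surf_repl D (And A Top) A D' \<Longrightarrow> stage_rule 5 D D'"
| s6: "\<lbrakk> c \<notin> conj_clusters D;
        surf_repl D (And (CAnd a A B) (CAnd b E F))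
          (CAnd c (CAnd a (And A (CAnd b E F)) (And B (CAnd b E F)))
                  (CAnd b (And (CAnd a A B) E) (And (CAnd a A B) F))) D' \<rbrakk>
       \<Longrightarrow> stage_rule 6 D D'"
| s7_L: "any_repl X (CAnd c E F) E X' \<Longrightarrow> stage_rule 7 (CAnd c X A) (CAnd c X' A)"
| s7_R: "any_repl X (CAnd c E F) F X' \<Longrightarrow> stage_rule 7 (CAnd c A X) (CAnd c A X')"

end

theory Submission
  imports Defs
begin

text \<open>Every stage replaces one occurrence of a subcirquent \<open>X\<close> by some \<open>Y\<close>, and rank is
strictly monotone in each argument of each connective, so it suffices that \<open>rank Y < rank X\<close>
for each rule. Only the distributive rules need thought. In stages 2 and 3 the duplicated \<open>C\<close>
costs at most a doubling, \<open>2 \<cdot> tet 5 m < tet 5 (m + 1)\<close>, which the taller tower on the left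
absorbs; in stage 6 each of the four conjunctions on the right has rank at most \<open>5 ^ (N - 1)\<close>
while the left has rank \<open>5 ^ N\<close>.\<close>

lemma less_power_base:
  fixes b n :: nat
  assumes "2 \<le> b"
  shows "n < b ^ n"
  using less_exp[of n] power_mono[OF assms, of n] by linarith

lemma double_less_power_base:
  fixes b n :: nat
  assumes "3 \<le> b" "1 \<le> n"
  shows "2 * n < b ^ n"
  using assms(2)
proof (induction n rule: dec_induct)
  case base
  then show ?case using assms(1) by simp
next
  case (step n)
  have "2 * Suc n \<le> 2 * (2 * n)" using step.hyps by simp
  also have "\<dots> < 2 * b ^ n" using step.IH by simp
  also have "\<dots> \<le> b * b ^ n" using assms(1) by simp
  finally show ?case by simp
qed

lemma tet_less_tet_Suc:
  assumes "2 \<le> b"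
  shows "tet b n < tet b (Suc n)"
proof (cases n)
  case 0
  then show ?thesis using assms by simp
next
  case (Suc m)
  then show ?thesis using less_power_base[OF assms, of "tet b (Suc m)"] by simp
qed

lemma strict_mono_tet: "2 \<le> b \<Longrightarrow> strict_mono (tet b)"
  using tet_less_tet_Suc by (simp add: strict_mono_Suc_iff)

lemma less_tet:
  assumes "2 \<le> b"
  shows "n < tet b n"
proof (induction n)
  case 0
  then show ?case by simp
next
  case (Suc n)
  then show ?case using tet_less_tet_Suc[OF assms, of n] by simp
qed

lemma tet_Suc: "1 \<le> n \<Longrightarrow> tet b (Suc n) = b ^ tet b n"
  by (cases n) auto

lemma double_tet_less_tet_Suc:
  assumes "3 \<le> b" "1 \<le> n"
  shows "2 * tet b n < tet b (Suc n)"
proof -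
  obtain m where n: "n = Suc m" using assms(2) by (cases n) auto
  have "1 \<le> tet b n" using less_tet[of b n] assms by simp
  then show ?thesis using double_less_power_base[OF assms(1)] n by simp
qed

lemma tet_add_tet_less:
  assumes "3 \<le> b" "1 \<le> x" "1 \<le> y" "x < z" "y < z"
  shows "tet b x + tet b y < tet b z"
proof -
  define m where "m = max x y"
  have mono: "tet b k \<le> tet b l \<longleftrightarrow> k \<le> l" for k l
    using strict_mono_less_eq[OF strict_mono_tet] assms(1) by simp
  have "tet b x + tet b y \<le> 2 * tet b m"
    using mono[of x m] mono[of y m] by (simp add: m_def)
  also have "\<dots> < tet b (Suc m)"
    using double_tet_less_tet_Suc assms(1,2) by (simp add: m_def)
  also have "\<dots> \<le> tet b z"
    using mono assms(4,5) by (simp add: m_def)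
  finally show ?thesis .
qed

lemma rank_pos: "1 \<le> rank X"
  by (induction X) (auto simp: Suc_le_eq intro: le_less_trans[OF _ less_tet])

lemma rank_Or_commute: "rank (Or A B) = rank (Or B A)"
  by (simp add: add.commute)

lemma rank_less_Or: "rank A < rank (Or A B) \<and> rank B < rank (Or A B)"
  using less_tet[of 5 "rank A + rank B"] rank_pos[of A] rank_pos[of B] by simp

lemma rank_less_And: "rank A < rank (And A B) \<and> rank B < rank (And A B)"
  using less_power_base[of 5 "rank A + rank B"] rank_pos[of A] rank_pos[of B] by simp

lemma surf_repl_rank_less:
  "surf_repl D X Y D' \<Longrightarrow> rank Y < rank X \<Longrightarrow> rank D' < rank D"
  by (induction rule: surf_repl.induct) (auto intro: strict_mono_less[OF strict_mono_tet, THEN iffD2])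

lemma any_repl_rank_less:
  "any_repl D X Y D' \<Longrightarrow> rank Y < rank X \<Longrightarrow> rank D' < rank D"
  by (induction rule: any_repl.induct) (auto intro: strict_mono_less[OF strict_mono_tet, THEN iffD2])

lemma rank_Or_And_distrib_less: "rank (And (Or A C) (Or B C)) < rank (Or (And A B) C)"
proof -
  let ?a = "rank A" and ?b = "rank B" and ?c = "rank C"
  obtain k where k: "5 ^ (?a + ?b) + ?c = Suc k" by (cases "5 ^ (?a + ?b) + ?c") auto
  have "2 * (?a + ?b) < 5 ^ (?a + ?b)"
    using double_less_power_base[of 5 "?a + ?b"] rank_pos[of A] by simp
  then have height: "?a + ?b + ?c < k"
    using k rank_pos[of A] rank_pos[of B] by arith
  have "tet 5 (?a + ?c) + tet 5 (?b + ?c) < tet 5 k"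
    by (rule tet_add_tet_less) (use height rank_pos[of A] rank_pos[of B] in auto)
  then have "5 ^ (tet 5 (?a + ?c) + tet 5 (?b + ?c)) < (5::nat) ^ tet 5 k"
    by (simp add: power_strict_increasing)
  also have "\<dots> = tet 5 (Suc k)"
    using height by (simp add: tet_Suc)
  finally show ?thesis by (simp add: k)
qed

lemma rank_Or_CAnd_distrib_less: "rank (CAnd c (Or A C) (Or B C)) < rank (Or (CAnd c A B) C)"
  using tet_add_tet_less[of 5 "rank A + rank C" "rank B + rank C" "rank A + rank B + rank C"]
    rank_pos[of A] rank_pos[of B] by simp

lemma rank_And_CAnd_distrib_less:
  "rank (CAnd c (CAnd a (And A (CAnd b E F)) (And B (CAnd b E F)))
                 (CAnd b (And (CAnd a A B) E) (And (CAnd a A B) F)))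
   < rank (And (CAnd a A B) (CAnd b E F))"
proof -
  let ?a = "rank A" and ?b = "rank B" and ?e = "rank E" and ?f = "rank F"
  obtain n where n: "?a + ?b + ?e + ?f = Suc n"
    using rank_pos[of A] by (cases "?a + ?b + ?e + ?f") auto
  have "(5::nat) ^ k \<le> 5 ^ n" if "k < ?a + ?b + ?e + ?f" for k
    using that n by (simp add: power_increasing)
  then have "(5::nat) ^ (?a + (?e + ?f)) \<le> 5 ^ n" "(5::nat) ^ (?b + (?e + ?f)) \<le> 5 ^ n"
    "(5::nat) ^ (?a + ?b + ?e) \<le> 5 ^ n" "(5::nat) ^ (?a + ?b + ?f) \<le> 5 ^ n"
    using rank_pos[of A] rank_pos[of B] rank_pos[of E] rank_pos[of F] by simp_all
  then have "(5::nat) ^ (?a + (?e + ?f)) + 5 ^ (?b + (?e + ?f)) + (5 ^ (?a + ?b + ?e) + 5 ^ (?a + ?b + ?f))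
      < 5 * 5 ^ n"
    using zero_less_power[of "5::nat" n] by linarith
  also have "5 * 5 ^ n = rank (And (CAnd a A B) (CAnd b E F))"
    using n by (simp add: add.assoc)
  finally show ?thesis by simp
qed

theorem lemma7p4:
  fixes D D' :: "'l cirq" and i :: nat
  assumes "stage_rule i D D'"
  shows "rank D' < rank D"
  using assms
proof (induction rule: stage_rule.induct)
  case (s7_L X c E F X' A)
  then show ?case using any_repl_rank_less[OF s7_L] rank_pos[of F] by simp
next
  case (s7_R X c E F X' A)
  then show ?case using any_repl_rank_less[OF s7_R] rank_pos[of E] by simp
qed (erule surf_repl_rank_less,
     metis rank_less_Or rank_less_And rank_Or_commute rank_Or_And_distrib_less
       rank_Or_CAnd_distrib_less rank_And_CAnd_distrib_less rank_pos rank.simps(1,2) le_less_trans)+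

end
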